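(* If $\sigma^2<\infty$, then \[\lim_{m\to\infty}\mathbf{P}(N(m)=1\mid N(m)\ge1)=1.\]
   Context: $\xi$ is a random variable on $\{0,1,2,\dots\}$ with $\mathbf{P}(\xi=k)=p_k$, mean $\mu\in(0,1)$ and variance $\sigma^2>0$; $\xi^*$ has the size-biased law $\mathbf{P}(\xi^*=k)=kp_k/\mu$, $k\ge1$. For a rooted tree $T$, $\mathcal{H}(T)$ is its height. Let $(\mathcal{T}_j)_{j\ge1}$ be independent Galton–Watson trees with offspring law $\xi$, independent of $\xi^*$, and $N(m)=\sum_{j=1}^{\xi^*-1}\mathbf{1}_{\{\mathcal{H}(\mathcal{T}_j)\ge m\}}$. *)

theory Defs
  imports "HOL-Probability.Probability"
begin

datatype ptree = PNode "ptree list"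

fun height :: "ptree \<Rightarrow> nat" where
  "height (PNode ts) = (if ts = [] then 0 else Suc (fold max (map height ts) 0))"

definition offspring_mean :: "nat pmf \<Rightarrow> real" where
  "offspring_mean \<xi> = measure_pmf.expectation \<xi> real"

definition size_biased :: "nat pmf \<Rightarrow> nat pmf" where
  "size_biased \<xi> = embed_pmf (\<lambda>k. real k * pmf \<xi> k / offspring_mean \<xi>)"

fun gw_trunc :: "nat pmf \<Rightarrow> nat \<Rightarrow> ptree pmf" where
  "gw_trunc \<xi> 0 = return_pmf (PNode [])"
| "gw_trunc \<xi> (Suc n) =
     bind_pmf \<xi> (\<lambda>k. map_pmf PNode (replicate_pmf k (gw_trunc \<xi> n)))"

text \<open>Law of N(m) = #{ j \<le> xi* - 1 : H(T_j) \<ge> m }, with T_j iid GW trees independent of xi*.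
  The event H(T) \<ge> m only depends on generations 0..m, so the truncation at depth m
  is used.\<close>
definition N_law :: "nat pmf \<Rightarrow> nat \<Rightarrow> nat pmf" where
  "N_law \<xi> m =
     bind_pmf (size_biased \<xi>) (\<lambda>k.
       map_pmf (\<lambda>ts. length (filter (\<lambda>t. height t \<ge> m) ts))
         (replicate_pmf (k - 1) (gw_trunc \<xi> m)))"

end

theory Submission imports Defs begin

text \<open>
  Let \<open>q\<^sub>m\<close> be the probability that a Galton--Watson tree reaches height \<open>m\<close> and
  \<open>K = \<xi>\<^sup>* - 1\<close>. Given \<open>K\<close>, the count \<open>N(m)\<close> is binomial with parameters \<open>K\<close> and \<open>q\<^sub>m\<close>, so
  \<open>P(N(m) = 1) = q\<^sub>m E[K (1 - q\<^sub>m)\<^bsup>K-1\<^esup>]\<close> while \<open>P(N(m) \<ge> 1) \<le> q\<^sub>m E[K]\<close> by Bernoulli's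
  inequality. Subcriticality gives \<open>q\<^sub>m \<le> \<mu>\<^sup>m \<rightarrow> 0\<close>, and \<open>E[K] < \<infinity>\<close> because
  \<open>E[\<xi>\<^sup>*] = E[\<xi>\<^sup>2]/\<mu>\<close>; dominated convergence then sends the ratio of the two bounds to 1.
\<close>

lemma integral_pmf_pos:
  fixes f :: "'a \<Rightarrow> real"
  assumes "\<And>y. 0 \<le> f y" "integrable (measure_pmf p) f" "x \<in> set_pmf p" "0 < f x"
  shows "0 < (\<integral>y. f y \<partial>measure_pmf p)"
proof -
  have "0 \<le> (\<integral>y. f y \<partial>measure_pmf p)"
    using assms(1) by (simp add: integral_nonneg)
  moreover have "(\<integral>y. f y \<partial>measure_pmf p) \<noteq> 0"
    using assms by (subst integral_nonneg_eq_0_iff_AE) (auto simp: AE_measure_pmf_iff intro!: bexI[of _ x])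
  ultimately show ?thesis by simp
qed

lemma prob_pos_eq_1_minus_pmf_0: "measure_pmf.prob p {n::nat. 0 < n} = 1 - pmf p 0"
proof -
  have "{n::nat. 0 < n} = UNIV - {0}" by auto
  then show ?thesis
    using measure_pmf.prob_compl[of "{0}" p] by (simp add: measure_pmf_single)
qed

lemma one_minus_power_bounds:
  fixes q :: real
  assumes "0 \<le> q" "q \<le> 1"
  shows "0 \<le> 1 - (1 - q) ^ k" "1 - (1 - q) ^ k \<le> 1" "1 - (1 - q) ^ k \<le> real k * q"
proof -
  show "0 \<le> 1 - (1 - q) ^ k" "1 - (1 - q) ^ k \<le> 1"
    using assms by (auto intro: power_le_one)
  have "1 + real k * (- q) \<le> (1 + (- q)) ^ k"
    using assms by (intro Bernoulli_inequality) auto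
  then show "1 - (1 - q) ^ k \<le> real k * q" by simp
qed

lemma integrable_one_minus_power:
  fixes q :: real and p :: "nat pmf"
  assumes "0 \<le> q" "q \<le> 1"
  shows "integrable p (\<lambda>k. 1 - (1 - q) ^ k)"
  by (rule measure_pmf.integrable_const_bound[where B=1]) (use one_minus_power_bounds[OF assms] in auto)

lemma replicate_pmf_map_pmf: "replicate_pmf n (map_pmf f p) = map_pmf (map f) (replicate_pmf n p)"
  by (induction n) (simp_all add: map_pmf_def bind_assoc_pmf bind_return_pmf)

lemma bernoulli_pmf_pmf_True: "bernoulli_pmf (pmf p True) = p"
proof (rule pmf_eqI)
  fix b show "pmf (bernoulli_pmf (pmf p True)) b = pmf p b"
    by (cases b) (simp_all add: pmf_False_conv_True pmf_le_1)
qed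

lemma map_pmf_count_filter_replicate_pmf:
  "map_pmf (\<lambda>xs. length (filter P xs)) (replicate_pmf n p) = binomial_pmf n (pmf (map_pmf P p) True)"
proof -
  let ?q = "pmf (map_pmf P p) True"
  have "binomial_pmf n ?q = map_pmf (length \<circ> filter id) (replicate_pmf n (map_pmf P p))"
    using binomial_pmf_altdef[of ?q n] by (simp add: pmf_le_1 bernoulli_pmf_pmf_True)
  also have "\<dots> = map_pmf (\<lambda>xs. length (filter P xs)) (replicate_pmf n p)"
    by (simp add: replicate_pmf_map_pmf map_pmf_comp filter_map o_def)
  finally show ?thesis by simp
qed

lemma integrable_of_offspring_mean_pos:
  assumes "0 < offspring_mean \<xi>"
  shows "integrable (measure_pmf \<xi>) real"
  using assms unfolding offspring_mean_def
  by (metis less_irrefl not_integrable_integral_eq)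

lemma pmf_size_biased:
  assumes mu: "0 < offspring_mean \<xi>"
  shows "pmf (size_biased \<xi>) k = real k * pmf \<xi> k / offspring_mean \<xi>"
proof -
  let ?mu = "offspring_mean \<xi>"
  have "(\<integral>\<^sup>+ k. ennreal (real k * pmf \<xi> k / ?mu) \<partial>count_space UNIV)
      = (\<integral>\<^sup>+ k. ennreal (pmf \<xi> k) * ennreal (real k / ?mu) \<partial>count_space UNIV)"
    using mu by (intro nn_integral_cong) (simp add: ennreal_mult'[symmetric] field_simps)
  also have "\<dots> = (\<integral>\<^sup>+ k. ennreal (real k / ?mu) \<partial>measure_pmf \<xi>)"
    by (simp add: nn_integral_measure_pmf)
  also have "\<dots> = ennreal (\<integral> k. real k / ?mu \<partial>measure_pmf \<xi>)"
    using mu integrable_of_offspring_mean_pos[OF mu] by (intro nn_integral_eq_integral) auto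
  also have "(\<integral> k. real k / ?mu \<partial>measure_pmf \<xi>) = 1"
    using mu by (simp add: offspring_mean_def[symmetric])
  finally have "(\<integral>\<^sup>+ k. ennreal (real k * pmf \<xi> k / ?mu) \<partial>count_space UNIV) = 1"
    by simp
  then show ?thesis unfolding size_biased_def
    by (rule pmf_embed_pmf[rotated]) (use mu in auto)
qed

lemma set_pmf_size_biased:
  assumes "0 < offspring_mean \<xi>"
  shows "set_pmf (size_biased \<xi>) = set_pmf \<xi> - {0}"
  using assms by (auto simp: set_pmf_eq pmf_size_biased)

lemma measure_pmf_size_biased:
  assumes mu: "0 < offspring_mean \<xi>"
  shows "measure_pmf (size_biased \<xi>) = density (measure_pmf \<xi>) (\<lambda>k. real k / offspring_mean \<xi>)"
proof -
  have "measure_pmf (size_biased \<xi>)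
      = density (count_space UNIV) (\<lambda>k. ennreal (pmf \<xi> k) * ennreal (real k / offspring_mean \<xi>))"
    unfolding measure_pmf_eq_density
    by (intro density_cong) (use mu in \<open>auto simp: pmf_size_biased ennreal_mult'[symmetric]\<close>)
  also have "\<dots> = density (measure_pmf \<xi>) (\<lambda>k. real k / offspring_mean \<xi>)"
    unfolding measure_pmf_eq_density by (rule density_density_eq[symmetric]) auto
  finally show ?thesis .
qed

lemma integrable_size_biased_iff:
  fixes f :: "nat \<Rightarrow> real"
  assumes "0 < offspring_mean \<xi>"
  shows "integrable (size_biased \<xi>) f \<longleftrightarrow> integrable \<xi> (\<lambda>k. real k / offspring_mean \<xi> * f k)"
  unfolding measure_pmf_size_biased[OF assms]
  by (subst integrable_density) (use assms in auto)

lemma integrable_size_biased_minus_one: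
  assumes mu: "0 < offspring_mean \<xi>"
    and second_moment: "integrable \<xi> (\<lambda>k. (real k)\<^sup>2)"
  shows "integrable (map_pmf (\<lambda>k. k - 1) (size_biased \<xi>)) real"
proof -
  have "integrable \<xi> (\<lambda>k. real k / offspring_mean \<xi> * real (k - 1))"
  proof (rule Bochner_Integration.integrable_bound)
    show "integrable \<xi> (\<lambda>k. (real k)\<^sup>2 / offspring_mean \<xi>)"
      using second_moment by simp
    show "AE k in measure_pmf \<xi>. norm (real k / offspring_mean \<xi> * real (k - 1))
                                  \<le> norm ((real k)\<^sup>2 / offspring_mean \<xi>)"
    proof (rule AE_I2)
      fix k :: nat
      have "real k * real (k - 1) \<le> real k * real k" by (intro mult_left_mono) auto
      then show "norm (real k / offspring_mean \<xi> * real (k - 1)) \<le> norm ((real k)\<^sup>2 / offspring_mean \<xi>)"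
        using mu by (simp add: power2_eq_square divide_right_mono)
    qed
  qed simp
  then show ?thesis
    using integrable_size_biased_iff[OF mu] by (simp add: o_def)
qed

lemma le_fold_max_iff: "(m::nat) \<le> fold max xs a \<longleftrightarrow> m \<le> a \<or> (\<exists>x\<in>set xs. m \<le> x)"
  by (induction xs arbitrary: a) auto

lemma Suc_le_height_PNode_iff: "Suc m \<le> height (PNode ts) \<longleftrightarrow> (\<exists>t\<in>set ts. m \<le> height t)"
  by (auto simp: le_fold_max_iff neq_Nil_conv)

definition gw_survival :: "nat pmf \<Rightarrow> nat \<Rightarrow> real" where
  "gw_survival \<xi> m = pmf (map_pmf (\<lambda>t. m \<le> height t) (gw_trunc \<xi> m)) True"

lemma gw_survival_0 [simp]: "gw_survival \<xi> 0 = 1"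
  by (simp add: gw_survival_def)

lemma gw_survival_nonneg: "0 \<le> gw_survival \<xi> m"
  and gw_survival_le_1: "gw_survival \<xi> m \<le> 1"
  by (simp_all add: gw_survival_def pmf_le_1)

lemma gw_survival_Suc:
  "gw_survival \<xi> (Suc m) = (\<integral>k. 1 - (1 - gw_survival \<xi> m) ^ k \<partial>\<xi>)"
proof -
  let ?q = "gw_survival \<xi> m"
  have q: "?q \<in> {0..1}" by (simp add: gw_survival_nonneg gw_survival_le_1)
  have "map_pmf (\<lambda>t. Suc m \<le> height t) (map_pmf PNode (replicate_pmf k (gw_trunc \<xi> m)))
      = map_pmf (\<lambda>n. 0 < n) (binomial_pmf k ?q)" for k
    unfolding gw_survival_def map_pmf_count_filter_replicate_pmf[symmetric] map_pmf_comp
    by (intro map_pmf_cong refl) (simp add: Suc_le_height_PNode_iff filter_empty_conv del: height.simps)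
  moreover have "pmf (map_pmf (\<lambda>n. 0 < n) (binomial_pmf k ?q)) True = 1 - (1 - ?q) ^ k" for k
    using prob_pos_eq_1_minus_pmf_0[of "binomial_pmf k ?q"] q
    by (simp add: pmf_map vimage_def)
  ultimately show ?thesis
    by (simp add: gw_survival_def[of \<xi> "Suc m"] map_bind_pmf pmf_bind del: height.simps)
qed

lemma gw_survival_Suc_le:
  fixes \<xi> :: "nat pmf"
  assumes "integrable \<xi> real"
  shows "gw_survival \<xi> (Suc m) \<le> offspring_mean \<xi> * gw_survival \<xi> m"
proof -
  let ?q = "gw_survival \<xi> m"
  have q: "0 \<le> ?q" "?q \<le> 1" by (simp_all add: gw_survival_nonneg gw_survival_le_1)
  have "gw_survival \<xi> (Suc m) \<le> (\<integral>k. real k * ?q \<partial>\<xi>)"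
    unfolding gw_survival_Suc
    by (rule integral_mono) (use assms q one_minus_power_bounds integrable_one_minus_power in auto)
  also have "\<dots> = offspring_mean \<xi> * ?q"
    by (simp add: offspring_mean_def)
  finally show ?thesis .
qed

lemma gw_survival_le_power:
  fixes \<xi> :: "nat pmf"
  assumes "integrable \<xi> real"
  shows "gw_survival \<xi> m \<le> offspring_mean \<xi> ^ m"
proof (induction m)
  case (Suc m)
  have "0 \<le> offspring_mean \<xi>"
    unfolding offspring_mean_def by simp
  with Suc have "offspring_mean \<xi> * gw_survival \<xi> m \<le> offspring_mean \<xi> ^ Suc m"
    by (simp add: mult_left_mono)
  with gw_survival_Suc_le[OF assms, of m] show ?case by simp
qed simp

lemma gw_survival_tendsto_0:
  fixes \<xi> :: "nat pmf"
  assumes "integrable \<xi> real" "offspring_mean \<xi> < 1"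
  shows "gw_survival \<xi> \<longlonglongrightarrow> 0"
proof (rule tendsto_sandwich[of "\<lambda>_. 0" _ _ "\<lambda>m. offspring_mean \<xi> ^ m"])
  show "(\<lambda>m. offspring_mean \<xi> ^ m) \<longlonglongrightarrow> 0"
    using assms(2) by (intro LIMSEQ_power_zero) (simp add: offspring_mean_def)
qed (use gw_survival_nonneg gw_survival_le_power[OF assms(1)] in auto)

lemma gw_survival_pos:
  assumes "k \<in> set_pmf \<xi>" "0 < k"
  shows "0 < gw_survival \<xi> m"
proof (induction m)
  case (Suc m)
  let ?q = "gw_survival \<xi> m"
  have q: "0 < ?q" "?q \<le> 1" using Suc gw_survival_le_1 by auto
  have "(1 - ?q) ^ k \<le> 1 - ?q"
    using q assms(2) power_decreasing[of 1 k "1 - ?q"] by simp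
  with q have "0 < 1 - (1 - ?q) ^ k" by simp
  with q show ?case
    unfolding gw_survival_Suc
    by (intro integral_pmf_pos[OF _ _ assms(1)]) (auto simp: integrable_one_minus_power intro: power_le_one)
qed simp

lemma prob_binomial_mixture_eq_1:
  fixes K :: "nat pmf"
  assumes "q \<in> {0..1}"
  shows "measure_pmf.prob (bind_pmf K (\<lambda>n. binomial_pmf n q)) {1}
           = q * (\<integral>n. real n * (1 - q) ^ (n - 1) \<partial>K)"
proof -
  have "measure_pmf.prob (bind_pmf K (\<lambda>n. binomial_pmf n q)) {1}
      = (\<integral>n. q * (real n * (1 - q) ^ (n - 1)) \<partial>K)"
    unfolding measure_pmf_single pmf_bind
    using assms by (intro Bochner_Integration.integral_cong) auto
  then show ?thesis by simp
qed

lemma prob_binomial_mixture_pos_le: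
  fixes K :: "nat pmf"
  assumes q: "q \<in> {0..1}" and K: "integrable K real"
  shows "measure_pmf.prob (bind_pmf K (\<lambda>n. binomial_pmf n q)) {n. 0 < n} \<le> q * (\<integral>n. real n \<partial>K)"
proof -
  have "measure_pmf.prob (bind_pmf K (\<lambda>n. binomial_pmf n q)) {n. 0 < n}
      = 1 - (\<integral>n. (1 - q) ^ n \<partial>K)"
    unfolding prob_pos_eq_1_minus_pmf_0 pmf_bind
    using q by (simp cong: Bochner_Integration.integral_cong)
  also have "\<dots> = (\<integral>n. 1 - (1 - q) ^ n \<partial>K)"
    using q by (simp add: integrable_one_minus_power measure_pmf.integrable_const_bound[where B=1] power_le_one)
  also have "\<dots> \<le> (\<integral>n. real n * q \<partial>K)"
    using q K by (intro integral_mono) (auto simp: integrable_one_minus_power one_minus_power_bounds(3))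
  finally show ?thesis by (simp add: mult.commute)
qed

lemma tendsto_integral_times_power:
  fixes K :: "nat pmf" and q :: "nat \<Rightarrow> real"
  assumes K: "integrable K real" and q: "\<And>m. q m \<in> {0..1}" "q \<longlonglongrightarrow> 0"
  shows "(\<lambda>m. \<integral>n. real n * (1 - q m) ^ (n - 1) \<partial>K) \<longlonglongrightarrow> (\<integral>n. real n \<partial>K)"
proof (rule integral_dominated_convergence[where w=real])
  have "(\<lambda>m. real n * (1 - q m) ^ (n - 1)) \<longlonglongrightarrow> real n * (1 - 0) ^ (n - 1)" for n
    by (intro tendsto_intros q(2))
  then show "AE n in K. (\<lambda>m. real n * (1 - q m) ^ (n - 1)) \<longlonglongrightarrow> real n"
    by (intro AE_I2) simp
  show "AE n in K. norm (real n * (1 - q m) ^ (n - 1)) \<le> real n" for m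
    using q(1)[of m] by (intro AE_I2) (auto intro!: mult_left_le power_le_one)
qed (use K in auto)

lemma binomial_mixture_one_given_pos_tendsto:
  fixes K :: "nat pmf" and q :: "nat \<Rightarrow> real"
  assumes K: "integrable K real" "0 < measure_pmf.expectation K real"
    and q: "\<And>m. 0 < q m" "\<And>m. q m \<le> 1" "q \<longlonglongrightarrow> 0"
  shows "(\<lambda>m. measure_pmf.prob (bind_pmf K (\<lambda>n. binomial_pmf n (q m))) {1}
             / measure_pmf.prob (bind_pmf K (\<lambda>n. binomial_pmf n (q m))) {n. n \<ge> 1}) \<longlonglongrightarrow> 1"
proof -
  define C where "C = (\<integral>n. real n \<partial>K)"
  define c where "c m = (\<integral>n. real n * (1 - q m) ^ (n - 1) \<partial>K)" for m
  define P1 where "P1 m = measure_pmf.prob (bind_pmf K (\<lambda>n. binomial_pmf n (q m))) {1}" for m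
  define P where "P m = measure_pmf.prob (bind_pmf K (\<lambda>n. binomial_pmf n (q m))) {n. n \<ge> 1}" for m
  have q01: "q m \<in> {0..1}" for m using q(1,2)[of m] by simp
  have c_lim: "c \<longlonglongrightarrow> C"
    unfolding c_def C_def by (rule tendsto_integral_times_power[OF K(1) q01 q(3)])
  have "C > 0" using K(2) by (simp add: C_def)
  have bounds: "c m / C \<le> P1 m / P m \<and> P1 m / P m \<le> 1" if "0 < c m" for m
  proof -
    have P1_eq: "P1 m = q m * c m"
      unfolding P1_def c_def by (rule prob_binomial_mixture_eq_1[OF q01])
    have "{n::nat. n \<ge> 1} = {n. 0 < n}" by auto
    then have P_le: "P m \<le> q m * C"
      unfolding P_def C_def using prob_binomial_mixture_pos_le[OF q01 K(1)] by simp
    have "P1 m \<le> P m"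
      unfolding P1_def P_def by (rule measure_pmf.finite_measure_mono) auto
    moreover have "0 < P1 m" using P1_eq q(1)[of m] that by simp
    moreover have "c m / C = P1 m / (q m * C)" using P1_eq q(1)[of m] by simp
    ultimately show ?thesis
      using P_le by (auto intro: divide_left_mono)
  qed
  have "eventually (\<lambda>m. 0 < c m) sequentially"
    using order_tendstoD(1)[OF c_lim \<open>C > 0\<close>] .
  then have "eventually (\<lambda>m. c m / C \<le> P1 m / P m \<and> P1 m / P m \<le> 1) sequentially"
    by (rule eventually_mono) (rule bounds)
  then have lower: "eventually (\<lambda>m. c m / C \<le> P1 m / P m) sequentially"
    and upper: "eventually (\<lambda>m. P1 m / P m \<le> 1) sequentially"
    unfolding eventually_conj_iff by blast+
  have "(\<lambda>m. c m / C) \<longlonglongrightarrow> 1"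
    using tendsto_divide[OF c_lim tendsto_const[of C]] \<open>C > 0\<close> by simp
  from tendsto_sandwich[OF lower upper this tendsto_const] have "(\<lambda>m. P1 m / P m) \<longlonglongrightarrow> 1" .
  then show ?thesis unfolding P1_def P_def .
qed

lemma N_law_eq_binomial_mixture:
  "N_law \<xi> m = bind_pmf (map_pmf (\<lambda>k. k - 1) (size_biased \<xi>)) (\<lambda>n. binomial_pmf n (gw_survival \<xi> m))"
  unfolding N_law_def map_pmf_count_filter_replicate_pmf gw_survival_def bind_map_pmf ..

theorem lemma3p1:
  fixes \<xi> :: "nat pmf"
  assumes mean_pos: "0 < offspring_mean \<xi>"
    and mean_lt1: "offspring_mean \<xi> < 1"
    and var_finite: "integrable (measure_pmf \<xi>) (\<lambda>k. (real k)\<^sup>2)"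
    and var_pos: "0 < measure_pmf.variance \<xi> real"
    and nondeg: "measure_pmf.prob \<xi> {k. k \<ge> 2} > 0"
  shows "(\<lambda>m. measure_pmf.prob (N_law \<xi> m) {1} / measure_pmf.prob (N_law \<xi> m) {n. n \<ge> 1})
           \<longlonglongrightarrow> 1"
proof -
  let ?K = "map_pmf (\<lambda>k. k - 1) (size_biased \<xi>)"
  obtain k where k: "k \<in> set_pmf \<xi>" "2 \<le> k"
    using nondeg by (metis (mono_tags) measure_pmf_zero_iff disjoint_iff mem_Collect_eq less_irrefl)
  have "integrable ?K real"
    by (rule integrable_size_biased_minus_one[OF mean_pos var_finite])
  moreover have "0 < measure_pmf.expectation ?K real"
    using k set_pmf_size_biased[OF mean_pos]
    by (intro integral_pmf_pos[where x="k - 1"] \<open>integrable ?K real\<close>) auto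
  moreover have "0 < gw_survival \<xi> m" for m
    using k by (intro gw_survival_pos) auto
  moreover have "gw_survival \<xi> \<longlonglongrightarrow> 0"
    by (rule gw_survival_tendsto_0[OF integrable_of_offspring_mean_pos[OF mean_pos] mean_lt1])
  ultimately show ?thesis
    unfolding N_law_eq_binomial_mixture
    by (intro binomial_mixture_one_given_pos_tendsto gw_survival_le_1)
qed

end
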